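(* Let $V$ be a finite-dimensional super vector space over $\mathbb{Q}$ and let $\xi,\eta\in\operatorname{Der}(T(V^* ))$ be vector fields. Then \[ \nabla([\xi,\eta]) = (L_{\xi}\otimes 1 + 1\otimes L_{\xi})[\nabla(\eta)] - (-1)^{|\xi||\eta|} (L_{\eta}\otimes 1 + 1\otimes L_{\eta})[\nabla(\xi)]. \]
   Context: All vector spaces are $\mathbb{Z}/2$-graded (super) vector spaces over $\mathbb{Q}$ and the Koszul sign rule is used throughout; $|a|$ denotes the parity of $a$. $T(V^* )=\bigoplus_{i\ge 0}(V^* )^{\otimes i}$ is the tensor algebra on the dual space; a vector field is a graded derivation of $T(V^* )$, and $\operatorname{Der}(T(V^* ))$ denotes the space of these, with graded commutator $[\xi,\eta]=\xi\eta-(-1)^{|\xi||\eta|}\eta\xi$. The space of noncommutative $0$-forms is $\mathrm{DR}^0(V):=T(V^* )/[T(V^* ),T(V^* )]$ (quotient by the subspace of graded commutators), which equals $\bigoplus_{i\ge0}((V^* )^{\otimes i})_{\mathbb{Z}/i\mathbb{Z}}$ (cyclic coinvariants). A vector field $\xi$ maps commutators to commutators and so induces the Lie derivative $L_\xi:\mathrm{DR}^0(V)\to\mathrm{DR}^0(V)$, $L_\xi(x)=\xi(x)$. On $\mathrm{DR}^0(V)\otimes\mathrm{DR}^0(V)$, $(L_\xi\otimes1+1\otimes L_\xi)(a\otimes b)=L_\xi(a)\otimes b+(-1)^{|\xi||a|}a\otimes L_\xi(b)$. Divergence: choose homogeneous coordinates $x_1,\dots,x_N$ on $V$ (a basis of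 $V^*$) and let $\partial_{x_i}$ be the derivation with $\partial_{x_i}(x_j)=\delta_{ij}$. For linear functions $f_1,\dots,f_k\in V^*$ and the vector field $\xi=(f_1\cdots f_k)\partial_{x_i}$, define \[ \nabla(\xi):=\sum_{j=1}^k (-1)^{|x_i|(|f_j|+\cdots+|f_k|)}\, \partial_{x_i}(f_j)\,[(f_1\cdots f_{j-1})\otimes (f_{j+1}\cdots f_k)] \in \mathrm{DR}^0(V)\otimes\mathrm{DR}^0(V), \] (here $\partial_{x_i}(f_j)\in\mathbb{Q}$) and extend linearly to $\nabla:\operatorname{Der}(T(V^* ))\to\mathrm{DR}^0(V)\otimes\mathrm{DR}^0(V)$; this is independent of the choice of coordinates. *)

theory Defs
  imports Complex_Main "HOL-Library.Poly_Mapping"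
begin

text \<open>Coordinates of V are indexed by a finite type 'a; the parity of the
  coordinate x_i is given by par i (True = odd).  T(V^*) is the free
  associative algebra on the x_i: finitely supported rational combinations of
  words.  T(V^*) tensor T(V^*) has basis the pairs of words.\<close>

type_synonym 'a tens = "'a list \<Rightarrow>\<^sub>0 rat"
type_synonym 'a tens2 = "('a list \<times> 'a list) \<Rightarrow>\<^sub>0 rat"

definition ksign :: "bool \<Rightarrow> rat" where
  "ksign b = (if b then -1 else 1)"

definition wpar :: "('a \<Rightarrow> bool) \<Rightarrow> 'a list \<Rightarrow> bool" where
  "wpar par w = odd (length (filter par w))"

definition scal :: "rat \<Rightarrow> ('b \<Rightarrow>\<^sub>0 rat) \<Rightarrow> ('b \<Rightarrow>\<^sub>0 rat)" where
  "scal c a = Poly_Mapping.map (\<lambda>x. c * x) a"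

definition lin_ext :: "('b \<Rightarrow> ('c \<Rightarrow>\<^sub>0 rat)) \<Rightarrow> ('b \<Rightarrow>\<^sub>0 rat) \<Rightarrow> ('c \<Rightarrow>\<^sub>0 rat)" where
  "lin_ext f a = (\<Sum>w\<in>Poly_Mapping.keys a. scal (Poly_Mapping.lookup a w) (f w))"

definition tmul :: "'a tens \<Rightarrow> 'a tens \<Rightarrow> 'a tens" where
  "tmul a b = lin_ext (\<lambda>u. lin_ext (\<lambda>v. Poly_Mapping.single (u @ v) 1) b) a"

definition tensor :: "'a tens \<Rightarrow> 'a tens \<Rightarrow> 'a tens2" where
  "tensor a b = lin_ext (\<lambda>u. lin_ext (\<lambda>v. Poly_Mapping.single (u, v) 1) b) a"

definition homog :: "('a \<Rightarrow> bool) \<Rightarrow> bool \<Rightarrow> 'a tens \<Rightarrow> bool" where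
  "homog par q a \<longleftrightarrow> (\<forall>w\<in>Poly_Mapping.keys a. wpar par w = q)"

definition rspan :: "('b \<Rightarrow>\<^sub>0 rat) set \<Rightarrow> ('b \<Rightarrow>\<^sub>0 rat) set" where
  "rspan S = {x. \<exists>F c. finite F \<and> F \<subseteq> S \<and> x = (\<Sum>s\<in>F. scal (c s) s)}"

definition is_vector_field :: "('a \<Rightarrow> bool) \<Rightarrow> bool \<Rightarrow> ('a tens \<Rightarrow> 'a tens) \<Rightarrow> bool" where
  "is_vector_field par p D \<longleftrightarrow>
     (\<forall>a b. D (a + b) = D a + D b) \<and>
     (\<forall>c a. D (scal c a) = scal c (D a)) \<and>
     (\<forall>q a. homog par q a \<longrightarrow> homog par (q \<noteq> p) (D a)) \<and>
     (\<forall>q a b. homog par q a \<longrightarrow>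
        D (tmul a b) = tmul (D a) b + scal (ksign (p \<and> q)) (tmul a (D b)))"

definition vf_bracket :: "bool \<Rightarrow> ('a tens \<Rightarrow> 'a tens) \<Rightarrow> bool \<Rightarrow> ('a tens \<Rightarrow> 'a tens) \<Rightarrow> 'a tens \<Rightarrow> 'a tens" where
  "vf_bracket p D q E = (\<lambda>a. D (E a) - scal (ksign (p \<and> q)) (E (D a)))"

definition gen :: "'a \<Rightarrow> 'a tens" where
  "gen i = Poly_Mapping.single [i] 1"

text \<open>Divergence, lifted to T tensor T (representatives of classes in
  DR^0 tensor DR^0):  D = sum_i D(x_i) d/dx_i, and for a word
  w = f_1...f_k, the summand at position j (0-based) with f_j = x_i has sign
  (-1)^(|x_i| (|f_j|+...+|f_k|)).\<close>
definition nabla :: "('a::finite \<Rightarrow> bool) \<Rightarrow> ('a tens \<Rightarrow> 'a tens) \<Rightarrow> 'a tens2" where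
  "nabla par D = (\<Sum>i\<in>UNIV. lin_ext (\<lambda>w. \<Sum>j<length w.
       if w ! j = i then Poly_Mapping.single (take j w, drop (Suc j) w)
                           (ksign (par i \<and> wpar par (drop j w)))
       else 0) (D (gen i)))"

text \<open>L_xi tensor 1 + 1 tensor L_xi, on representatives.\<close>
definition L2 :: "('a \<Rightarrow> bool) \<Rightarrow> bool \<Rightarrow> ('a tens \<Rightarrow> 'a tens) \<Rightarrow> 'a tens2 \<Rightarrow> 'a tens2" where
  "L2 par p D = lin_ext (\<lambda>(u, v).
      tensor (D (Poly_Mapping.single u 1)) (Poly_Mapping.single v 1)
    + scal (ksign (p \<and> wpar par u)) (tensor (Poly_Mapping.single u 1) (D (Poly_Mapping.single v 1))))"

definition comm_sub :: "('a \<Rightarrow> bool) \<Rightarrow> 'a tens set" where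
  "comm_sub par = rspan {tmul a b - scal (ksign (p \<and> q)) (tmul b a) | a b p q.
                          homog par p a \<and> homog par q b}"

text \<open>Kernel of T tensor T \<rightarrow> DR^0 tensor DR^0, i.e. [T,T] tensor T + T tensor [T,T].\<close>
definition dr2_kernel :: "('a \<Rightarrow> bool) \<Rightarrow> 'a tens2 set" where
  "dr2_kernel par = rspan ({tensor a b | a b. a \<in> comm_sub par} \<union>
                           {tensor a b | a b. b \<in> comm_sub par})"

text \<open>Equality in DR^0(V) tensor DR^0(V) of the classes of two representatives.\<close>
definition dr2_eq :: "('a \<Rightarrow> bool) \<Rightarrow> 'a tens2 \<Rightarrow> 'a tens2 \<Rightarrow> bool" where
  "dr2_eq par x y \<longleftrightarrow> x - y \<in> dr2_kernel par"

end

theory Submission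
  imports Defs
begin

text \<open>
  \<open>\<nabla>\<close> is a sum over the generators \<open>x\<^sub>i\<close> of the signed cuts of words at the occurrences
  of \<open>x\<^sub>i\<close>, and a vector field \<open>D\<close> sends a word to the words obtained by replacing one of
  its letters \<open>x\<^sub>m\<close> by a word \<open>v\<close> of \<open>D(x\<^sub>m)\<close>. Cutting such a word outside \<open>v\<close>
  reproduces \<open>(L\<^sub>D \<otimes> 1 + 1 \<otimes> L\<^sub>D)(\<nabla> w)\<close>; cutting inside \<open>v\<close> gives a cross term.
  For a word \<open>A x\<^sub>m B\<close> of \<open>E(x\<^sub>i)\<close> and a word \<open>a x\<^sub>i b\<close> of \<open>D(x\<^sub>m)\<close>, the cross term of
  \<open>D(E(x\<^sub>i))\<close> is \<open>(A a, b B)\<close> and that of \<open>E(D(x\<^sub>m))\<close> is \<open>(a A, B b)\<close>. They differ by a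
  simultaneous cyclic rotation of both tensor factors, so the cross terms of \<open>\<nabla>[D, E]\<close>
  vanish in \<open>DR\<^sup>0 \<otimes> DR\<^sup>0\<close>, signs included.
\<close>

abbreviation sng :: "'b \<Rightarrow> rat \<Rightarrow> 'b \<Rightarrow>\<^sub>0 rat" where "sng \<equiv> Poly_Mapping.single"
abbreviation lkp :: "('b \<Rightarrow>\<^sub>0 rat) \<Rightarrow> 'b \<Rightarrow> rat" where "lkp \<equiv> Poly_Mapping.lookup"
abbreviation kys :: "('b \<Rightarrow>\<^sub>0 rat) \<Rightarrow> 'b set" where "kys \<equiv> Poly_Mapping.keys"

section \<open>Finite rational combinations and linear extension\<close>

lemma lookup_scal [simp]: "lkp (scal c a) x = c * lkp a x"
  by (simp add: scal_def map.rep_eq when_def)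

lemma scal_add [simp]: "scal c (a + b) = scal c a + scal c b"
  by (rule poly_mapping_eqI) (simp add: lookup_add algebra_simps)

lemma scal_diff [simp]: "scal c (a - b) = scal c a - scal c b"
  by (rule poly_mapping_eqI) (simp add: lookup_minus algebra_simps)

lemma scal_zero [simp]: "scal c 0 = 0" "scal 0 a = 0"
  by (rule poly_mapping_eqI, simp)+

lemma scal_one [simp]: "scal 1 a = a"
  by (rule poly_mapping_eqI) simp

lemma scal_scal [simp]: "scal c (scal d a) = scal (c * d) a"
  by (rule poly_mapping_eqI) simp

lemma scal_single [simp]: "scal c (sng w d) = sng w (c * d)"
  by (rule poly_mapping_eqI) (simp add: lookup_single when_def)

lemma scal_add_left: "scal (c + d) a = scal c a + scal d a"
  by (rule poly_mapping_eqI) (simp add: lookup_add algebra_simps)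

lemma scal_sum: "scal c (sum f A) = (\<Sum>x\<in>A. scal c (f x))"
  by (induction A rule: infinite_finite_induct) auto

lemma poly_mapping_eq_sum_single: "a = (\<Sum>w\<in>kys a. sng w (lkp a w))"
proof (rule poly_mapping_eqI)
  fix k
  have "(\<Sum>w\<in>kys a. lkp (sng w (lkp a w)) k) = (\<Sum>w\<in>kys a. if w = k then lkp a k else 0)"
    by (rule sum.cong) (auto simp: lookup_single when_def)
  also have "\<dots> = lkp a k"
    by (simp add: in_keys_iff)
  finally show "lkp a k = lkp (\<Sum>w\<in>kys a. sng w (lkp a w)) k"
    by (simp add: lookup_sum)
qed

lemma lin_ext_eq_sum_superset:
  assumes "finite S" "kys a \<subseteq> S"
  shows "lin_ext f a = (\<Sum>w\<in>S. scal (lkp a w) (f w))"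
  unfolding lin_ext_def
  by (rule sum.mono_neutral_left) (use assms in \<open>auto simp: in_keys_iff\<close>)

lemma lin_ext_add [simp]: "lin_ext f (a + b) = lin_ext f a + lin_ext f b"
proof -
  let ?S = "kys a \<union> kys b"
  have "kys (a + b) \<subseteq> ?S"
    by (rule keys_add)
  then show ?thesis
    by (simp add: lin_ext_eq_sum_superset[of ?S] lookup_add scal_add_left sum.distrib)
qed

lemma lin_ext_zero [simp]: "lin_ext f 0 = 0"
  by (simp add: lin_ext_def)

lemma lin_ext_scal [simp]: "lin_ext f (scal c a) = scal c (lin_ext f a)"
proof -
  have "kys (scal c a) \<subseteq> kys a"
    by (auto simp: in_keys_iff)
  then show ?thesis
    by (simp add: lin_ext_eq_sum_superset[of "kys a"] scal_sum)
qed

lemma lin_ext_diff [simp]: "lin_ext f (a - b) = lin_ext f a - lin_ext f b"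
  by (metis lin_ext_add diff_add_cancel eq_diff_eq)

lemma lin_ext_sum: "lin_ext f (sum g A) = (\<Sum>x\<in>A. lin_ext f (g x))"
  by (induction A rule: infinite_finite_induct) auto

lemma lin_ext_single [simp]: "lin_ext f (sng w c) = scal c (f w)"
  by (cases "c = 0") (simp_all add: lin_ext_def)

lemma lin_ext_fun_add: "lin_ext (\<lambda>w. f w + g w) a = lin_ext f a + lin_ext g a"
  by (simp add: lin_ext_def sum.distrib)

lemma lin_ext_fun_diff: "lin_ext (\<lambda>w. f w - g w) a = lin_ext f a - lin_ext g a"
  by (simp add: lin_ext_def sum_subtractf)

lemma lin_ext_fun_sum: "lin_ext (\<lambda>w. \<Sum>x\<in>X. f x w) a = (\<Sum>x\<in>X. lin_ext (f x) a)"
  by (simp add: lin_ext_def scal_sum sum.swap[of _ X])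

lemma lin_ext_lin_ext: "lin_ext g (lin_ext f a) = lin_ext (\<lambda>w. lin_ext g (f w)) a"
  unfolding lin_ext_def[of f] by (simp add: lin_ext_sum lin_ext_def[of "\<lambda>w. lin_ext g (f w)"])

definition rat_linear :: "(('b \<Rightarrow>\<^sub>0 rat) \<Rightarrow> ('c \<Rightarrow>\<^sub>0 rat)) \<Rightarrow> bool" where
  "rat_linear F \<longleftrightarrow> (\<forall>a b. F (a + b) = F a + F b) \<and> (\<forall>c a. F (scal c a) = scal c (F a))"

lemma rat_linear_zero: "rat_linear F \<Longrightarrow> F 0 = 0"
  unfolding rat_linear_def by (metis add_cancel_right_right add_0)

lemma rat_linear_sum: "rat_linear F \<Longrightarrow> F (sum g A) = (\<Sum>x\<in>A. F (g x))"
  by (induction A rule: infinite_finite_induct) (auto simp: rat_linear_zero rat_linear_def)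

lemma rat_linear_eq_lin_ext:
  assumes "rat_linear F"
  shows "F a = lin_ext (\<lambda>w. F (sng w 1)) a"
proof -
  have "F a = F (\<Sum>w\<in>kys a. scal (lkp a w) (sng w 1))"
    by (subst poly_mapping_eq_sum_single) simp
  also have "\<dots> = lin_ext (\<lambda>w. F (sng w 1)) a"
    using assms unfolding lin_ext_def
    by (subst rat_linear_sum) (auto simp: rat_linear_def simp del: scal_single)
  finally show ?thesis .
qed

lemma lin_ext_single_one: "lin_ext (\<lambda>v. sng v 1) a = a"
  using rat_linear_eq_lin_ext[of "\<lambda>x. x" a] by (simp add: rat_linear_def)

lemma ksign_simps [simp]: "ksign False = 1" "ksign True = -1"
  by (simp_all add: ksign_def)

lemma ksign_mult: "ksign a * ksign b = ksign (a \<noteq> b)"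
  by (simp add: ksign_def)

lemma ksign_conj_xor: "ksign (p \<and> (a \<noteq> b)) = ksign (p \<and> a) * ksign (p \<and> b)"
  by (cases p; cases a; cases b) simp_all

lemma ksign_conj_xor' [simp]: "ksign (p \<and> (a = (\<not> b))) = ksign (p \<and> a) * ksign (p \<and> b)"
  by (cases p; cases a; cases b) simp_all

lemma wpar_Nil [simp]: "wpar par [] = False"
  by (simp add: wpar_def)

lemma wpar_Cons [simp]: "wpar par (x # w) = (par x \<noteq> wpar par w)"
  by (simp add: wpar_def)

lemma wpar_append [simp]: "wpar par (u @ v) = (wpar par u \<noteq> wpar par v)"
  by (simp add: wpar_def)

lemma homog_single: "homog par (wpar par w) (sng w c)"
  by (simp add: homog_def)

lemma homog_gen: "homog par (par i) (gen i)"
  using homog_single[of par "[i]" 1] by (simp add: gen_def)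

lemma tmul_single_left: "tmul (sng u 1) b = lin_ext (\<lambda>v. sng (u @ v) 1) b"
  by (simp add: tmul_def)

lemma tmul_single_right: "tmul a (sng w 1) = (\<Sum>u\<in>kys a. sng (u @ w) (lkp a u))"
  by (simp add: tmul_def lin_ext_def)

lemma tmul_singles: "tmul (sng u c) (sng v d) = sng (u @ v) (c * d)"
  by (simp add: tmul_def)

lemma tmul_Nil_left: "tmul (sng [] 1) b = b"
  by (simp add: tmul_single_left lin_ext_single_one)

lemma tmul_Nil_right: "tmul a (sng [] 1) = a"
  by (simp add: tmul_def lin_ext_single_one)

lemma tensor_singles: "tensor (sng u c) (sng v d) = sng (u, v) (c * d)"
  by (simp add: tensor_def)

lemma tensor_diff_left: "tensor (a - b) c = tensor a c - tensor b c"
  by (simp add: tensor_def)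

lemma tensor_diff_right: "tensor c (a - b) = tensor c a - tensor c b"
  unfolding tensor_def lin_ext_diff by (rule lin_ext_fun_diff)

lemma tensor_sum_left: "tensor (sum f A) b = (\<Sum>x\<in>A. tensor (f x) b)"
  by (simp add: tensor_def lin_ext_sum)

lemma tensor_sum_right: "tensor a (sum f A) = (\<Sum>x\<in>A. tensor a (f x))"
  unfolding tensor_def lin_ext_sum by (rule lin_ext_fun_sum)

lemma if_sum_zero: "(if P then sum f A else 0) = (\<Sum>x\<in>A. if P then f x else 0)"
  by simp

lemma sum_lessThan_add: "(\<Sum>j<m + (n::nat). f j) = (\<Sum>j<m. f j) + (\<Sum>j<n. f (m + j))"
  by (induction n) (simp_all add: add.assoc)

lemma sum_lessThan_triangle_swap:
  "(\<Sum>k<n. \<Sum>j<n - Suc k. g k (Suc k + j)) = (\<Sum>j<n. \<Sum>k<j. g k j)"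
proof (induction n)
  case 0
  then show ?case by simp
next
  case (Suc n)
  have "(\<Sum>k<Suc n. \<Sum>j<Suc n - Suc k. g k (Suc k + j))
      = (\<Sum>k<n. (\<Sum>j<n - Suc k. g k (Suc k + j)) + g k n)"
  proof (simp, rule sum.cong[OF refl])
    fix k assume "k \<in> {..<n}"
    then have "Suc n - Suc k = Suc (n - Suc k)" "Suc k + (n - Suc k) = n"
      by auto
    then show "(\<Sum>j<n - k. g k (Suc (k + j))) = (\<Sum>j<n - Suc k. g k (Suc (k + j))) + g k n"
      by simp
  qed
  also have "\<dots> = (\<Sum>j<Suc n. \<Sum>k<j. g k j)"
    using Suc.IH by (simp add: sum.distrib)
  finally show ?case .
qed

section \<open>Vector fields on words\<close>

text \<open>The derivation of parity \<open>p\<close> with \<open>x\<^sub>i \<mapsto> d i\<close>, applied to a word \<open>w\<close>: the letter at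
  position \<open>k\<close> is replaced by each word \<open>v\<close> of \<open>d (w ! k)\<close>, with the Koszul sign of
  moving the derivation past \<open>take k w\<close>.\<close>
definition deriv_word :: "('a \<Rightarrow> bool) \<Rightarrow> bool \<Rightarrow> ('a \<Rightarrow> 'a tens) \<Rightarrow> 'a list \<Rightarrow> 'a tens" where
  "deriv_word par p d w = (\<Sum>k<length w. \<Sum>v\<in>kys (d (w ! k)).
      sng (take k w @ v @ drop (Suc k) w) (ksign (p \<and> wpar par (take k w)) * lkp (d (w ! k)) v))"

lemma vector_field_rat_linear: "is_vector_field par p D \<Longrightarrow> rat_linear D"
  by (simp add: is_vector_field_def rat_linear_def)

lemma homog_vector_field_gen: "is_vector_field par p D \<Longrightarrow> homog par (par i \<noteq> p) (D (gen i))"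
  using homog_gen[of par i] by (simp add: is_vector_field_def)

lemma vector_field_Nil:
  assumes "is_vector_field par p D"
  shows "D (sng [] 1) = 0"
proof -
  have "homog par False (sng [] 1)"
    using homog_single[of par "[]" 1] by simp
  then have "D (tmul (sng [] 1) (sng [] 1))
      = tmul (D (sng [] 1)) (sng [] 1) + scal (ksign (p \<and> False)) (tmul (sng [] 1) (D (sng [] 1)))"
    using assms unfolding is_vector_field_def by blast
  then have "D (sng [] 1) = D (sng [] 1) + D (sng [] 1)"
    by (simp add: tmul_Nil_left tmul_Nil_right tmul_singles)
  then show ?thesis
    by simp
qed

lemma deriv_word_Cons:
  "deriv_word par p d (i # w) = (\<Sum>v\<in>kys (d i). sng (v @ w) (lkp (d i) v))
     + scal (ksign (p \<and> par i)) (lin_ext (\<lambda>u. sng (i # u) 1) (deriv_word par p d w))"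
  unfolding deriv_word_def length_Cons sum.lessThan_Suc_shift
  by (simp add: lin_ext_sum scal_sum ksign_conj_xor mult.assoc)

lemma vector_field_single:
  assumes "is_vector_field par p D"
  shows "D (sng w 1) = deriv_word par p (\<lambda>i. D (gen i)) w"
proof (induction w)
  case Nil
  then show ?case
    using vector_field_Nil[OF assms] by (simp add: deriv_word_def)
next
  case (Cons i w)
  have "sng (i # w) 1 = tmul (gen i) (sng w 1)"
    by (simp add: gen_def tmul_singles)
  then have "D (sng (i # w) 1)
      = tmul (D (gen i)) (sng w 1) + scal (ksign (p \<and> par i)) (tmul (gen i) (D (sng w 1)))"
    using assms homog_gen[of par i] unfolding is_vector_field_def by metis
  then show ?case
    by (simp add: deriv_word_Cons Cons.IH tmul_single_right gen_def tmul_single_left)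
qed

lemma vector_field_eq_lin_ext:
  "is_vector_field par p D \<Longrightarrow> D a = lin_ext (deriv_word par p (\<lambda>i. D (gen i))) a"
  using rat_linear_eq_lin_ext[OF vector_field_rat_linear, of par p D a]
  by (simp add: vector_field_single)

section \<open>Divergence of words\<close>

definition nabla_word :: "('a \<Rightarrow> bool) \<Rightarrow> 'a \<Rightarrow> 'a list \<Rightarrow> 'a tens2" where
  "nabla_word par i w = (\<Sum>j<length w. if w ! j = i
     then sng (take j w, drop (Suc j) w) (ksign (par i \<and> wpar par (drop j w))) else 0)"

definition cuts_left :: "('a \<Rightarrow> bool) \<Rightarrow> 'a \<Rightarrow> 'a list \<Rightarrow> 'a list \<Rightarrow> 'a tens2" where
  "cuts_left par i x y = (\<Sum>j<length x. if x ! j = i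
     then sng (take j x, drop (Suc j) x @ y) (ksign (par i \<and> wpar par (drop j x @ y))) else 0)"

definition cuts_right :: "('a \<Rightarrow> bool) \<Rightarrow> 'a \<Rightarrow> 'a list \<Rightarrow> 'a list \<Rightarrow> 'a tens2" where
  "cuts_right par i x y = (\<Sum>j<length y. if y ! j = i
     then sng (x @ take j y, drop (Suc j) y) (ksign (par i \<and> wpar par (drop j y))) else 0)"

definition cuts_mid :: "('a \<Rightarrow> bool) \<Rightarrow> 'a \<Rightarrow> 'a list \<Rightarrow> 'a list \<Rightarrow> 'a list \<Rightarrow> 'a tens2" where
  "cuts_mid par i x v y = (\<Sum>j<length v. if v ! j = i
     then sng (x @ take j v, drop (Suc j) v @ y) (ksign (par i \<and> wpar par (drop j v @ y))) else 0)"

lemma nabla_eq_sum_nabla_word: "nabla par D = (\<Sum>i\<in>UNIV. lin_ext (nabla_word par i) (D (gen i)))"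
  unfolding nabla_def nabla_word_def[abs_def] by simp

lemma nabla_word_append: "nabla_word par i (x @ y) = cuts_left par i x y + cuts_right par i x y"
  unfolding nabla_word_def cuts_left_def cuts_right_def length_append sum_lessThan_add
  by (intro arg_cong2[where f="(+)"] sum.cong) (auto simp: nth_append)

lemma cuts_right_append: "cuts_right par i x (v @ y) = cuts_mid par i x v y + cuts_right par i (x @ v) y"
  unfolding cuts_right_def cuts_mid_def length_append sum_lessThan_add
  by (intro arg_cong2[where f="(+)"] sum.cong) (auto simp: nth_append)

lemma nabla_word_append3:
  "nabla_word par i (x @ v @ y) = cuts_left par i x (v @ y) + cuts_mid par i x v y + cuts_right par i (x @ v) y"
  by (simp add: nabla_word_append cuts_right_append add.assoc)

definition deriv_before_cut :: "('a \<Rightarrow> bool) \<Rightarrow> bool \<Rightarrow> ('a \<Rightarrow> 'a tens) \<Rightarrow> 'a \<Rightarrow> 'a list \<Rightarrow> nat \<Rightarrow> nat \<Rightarrow> 'a tens2" where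
  "deriv_before_cut par p d i w k j = (if w ! j = i then (\<Sum>v\<in>kys (d (w ! k)).
     sng (take k w @ v @ drop (Suc k) (take j w), drop (Suc j) w)
       (ksign (par i \<and> wpar par (drop j w)) * (ksign (p \<and> wpar par (take k w)) * lkp (d (w ! k)) v)))
     else 0)"

lemma tensor_deriv_word_cut:
  assumes "j < length w"
  shows "(if w ! j = i then scal (ksign (par i \<and> wpar par (drop j w)))
            (tensor (deriv_word par p d (take j w)) (sng (drop (Suc j) w) 1)) else 0)
    = (\<Sum>k<j. deriv_before_cut par p d i w k j)"
proof -
  have "length (take j w) = j"
    using assms by simp
  then show ?thesis
    unfolding deriv_before_cut_def deriv_word_def
    by (simp add: tensor_sum_left tensor_singles scal_sum if_sum_zero)
qed

lemma cuts_right_deriv_word: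
  "(\<Sum>v\<in>kys (d (w ! k)). scal (ksign (p \<and> wpar par (take k w)) * lkp (d (w ! k)) v)
      (cuts_right par i (take k w @ v) (drop (Suc k) w)))
    = (\<Sum>j<length w - Suc k. deriv_before_cut par p d i w k (Suc k + j))"
proof -
  have "(\<Sum>v\<in>kys (d (w ! k)). scal (ksign (p \<and> wpar par (take k w)) * lkp (d (w ! k)) v)
          (cuts_right par i (take k w @ v) (drop (Suc k) w)))
      = (\<Sum>j<length w - Suc k. \<Sum>v\<in>kys (d (w ! k)). scal (ksign (p \<and> wpar par (take k w)) * lkp (d (w ! k)) v)
          (if drop (Suc k) w ! j = i
           then sng ((take k w @ v) @ take j (drop (Suc k) w), drop (Suc j) (drop (Suc k) w))
                  (ksign (par i \<and> wpar par (drop j (drop (Suc k) w))))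
           else 0))"
    unfolding cuts_right_def scal_sum by (simp add: sum.swap[where B = "{..<_}"])
  also have "\<dots> = (\<Sum>j<length w - Suc k. deriv_before_cut par p d i w k (Suc k + j))"
  proof (rule sum.cong[OF refl])
    fix j assume "j \<in> {..<length w - Suc k}"
    then have "drop (Suc k) w ! j = w ! (Suc k + j)"
      by simp
    moreover have "drop (Suc k) (take (Suc k + j) w) = take j (drop (Suc k) w)"
      by (simp add: drop_take)
    moreover have "drop j (drop (Suc k) w) = drop (Suc k + j) w"
      "drop (Suc j) (drop (Suc k) w) = drop (Suc (Suc k + j)) w"
      by (simp_all add: add.commute)
    ultimately show "(\<Sum>v\<in>kys (d (w ! k)). scal (ksign (p \<and> wpar par (take k w)) * lkp (d (w ! k)) v)
          (if drop (Suc k) w ! j = i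
           then sng ((take k w @ v) @ take j (drop (Suc k) w), drop (Suc j) (drop (Suc k) w))
                  (ksign (par i \<and> wpar par (drop j (drop (Suc k) w))))
           else 0)) = deriv_before_cut par p d i w k (Suc k + j)"
      unfolding deriv_before_cut_def
      by (simp add: if_sum_zero if_distrib[of "scal _"] mult_ac cong: if_cong)
  qed
  finally show ?thesis .
qed

lemma deriv_tensor_one_nabla_word:
  "(\<Sum>j<length w. if w ! j = i then scal (ksign (par i \<and> wpar par (drop j w)))
       (tensor (deriv_word par p d (take j w)) (sng (drop (Suc j) w) 1)) else 0)
    = (\<Sum>k<length w. \<Sum>v\<in>kys (d (w ! k)). scal (ksign (p \<and> wpar par (take k w)) * lkp (d (w ! k)) v)
       (cuts_right par i (take k w @ v) (drop (Suc k) w)))"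
proof -
  have "(\<Sum>j<length w. if w ! j = i then scal (ksign (par i \<and> wpar par (drop j w)))
          (tensor (deriv_word par p d (take j w)) (sng (drop (Suc j) w) 1)) else 0)
      = (\<Sum>j<length w. \<Sum>k<j. deriv_before_cut par p d i w k j)"
    by (rule sum.cong[OF refl]) (simp add: tensor_deriv_word_cut)
  also have "\<dots> = (\<Sum>k<length w. \<Sum>j<length w - Suc k. deriv_before_cut par p d i w k (Suc k + j))"
    by (rule sum_lessThan_triangle_swap[symmetric])
  finally show ?thesis
    by (simp only: cuts_right_deriv_word)
qed

definition deriv_after_cut :: "('a \<Rightarrow> bool) \<Rightarrow> bool \<Rightarrow> ('a \<Rightarrow> 'a tens) \<Rightarrow> 'a \<Rightarrow> 'a list \<Rightarrow> nat \<Rightarrow> nat \<Rightarrow> 'a tens2" where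
  "deriv_after_cut par p d i w j k = (if w ! j = i then (\<Sum>v\<in>kys (d (w ! k)).
     sng (take j w, drop (Suc j) (take k w) @ v @ drop (Suc k) w)
       (ksign (p \<and> wpar par (take k w)) * lkp (d (w ! k)) v
         * ksign (par i \<and> wpar par (drop j (take k w) @ v @ drop (Suc k) w))))
     else 0)"

lemma cuts_left_deriv_word:
  assumes "k < length w"
  shows "(\<Sum>v\<in>kys (d (w ! k)). scal (ksign (p \<and> wpar par (take k w)) * lkp (d (w ! k)) v)
      (cuts_left par i (take k w) (v @ drop (Suc k) w)))
    = (\<Sum>j<k. deriv_after_cut par p d i w j k)"
proof -
  have "length (take k w) = k"
    using assms by simp
  then have "(\<Sum>v\<in>kys (d (w ! k)). scal (ksign (p \<and> wpar par (take k w)) * lkp (d (w ! k)) v)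
          (cuts_left par i (take k w) (v @ drop (Suc k) w)))
      = (\<Sum>j<k. \<Sum>v\<in>kys (d (w ! k)). scal (ksign (p \<and> wpar par (take k w)) * lkp (d (w ! k)) v)
          (if take k w ! j = i
           then sng (take j (take k w), drop (Suc j) (take k w) @ v @ drop (Suc k) w)
                  (ksign (par i \<and> wpar par (drop j (take k w) @ v @ drop (Suc k) w)))
           else 0))"
    unfolding cuts_left_def scal_sum by (simp add: sum.swap[where B = "{..<_}"] del: wpar_append)
  also have "\<dots> = (\<Sum>j<k. deriv_after_cut par p d i w j k)"
  proof (rule sum.cong[OF refl])
    fix j assume "j \<in> {..<k}"
    then have "take k w ! j = w ! j" "take j (take k w) = take j w"
      by auto
    then show "(\<Sum>v\<in>kys (d (w ! k)). scal (ksign (p \<and> wpar par (take k w)) * lkp (d (w ! k)) v)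
          (if take k w ! j = i
           then sng (take j (take k w), drop (Suc j) (take k w) @ v @ drop (Suc k) w)
                  (ksign (par i \<and> wpar par (drop j (take k w) @ v @ drop (Suc k) w)))
           else 0)) = deriv_after_cut par p d i w j k"
      unfolding deriv_after_cut_def
      by (simp add: if_sum_zero if_distrib[of "scal _"] mult_ac cong: if_cong del: wpar_append)
  qed
  finally show ?thesis .
qed

lemma deriv_after_cut_Suc_add:
  assumes homog_d: "\<forall>m. homog par (par m \<noteq> p) (d m)"
    and len: "Suc j + k < length w" and letter: "w ! j = i"
  defines "t \<equiv> drop (Suc j) w"
  shows "deriv_after_cut par p d i w j (Suc j + k)
    = (\<Sum>v\<in>kys (d (t ! k)). sng (take j w, take k t @ v @ drop (Suc k) t)
        (ksign (par i \<and> wpar par (drop j w)) * (ksign (p \<and> wpar par (take j w))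
          * (ksign (p \<and> wpar par (take k t)) * lkp (d (t ! k)) v))))"
proof -
  define m where "m = w ! (Suc j + k)"
  define P Q R where "P = take j w" and "Q = take k t" and "R = drop (Suc (Suc j + k)) w"
  have tk: "t ! k = m"
    using len by (simp add: t_def m_def)
  have drop_t: "drop (Suc k) t = R"
    by (simp add: t_def R_def add.commute)
  have drop_take: "drop (Suc j) (take (Suc j + k) w) = Q"
    by (simp add: t_def Q_def drop_take)
  have take_w: "take (Suc j + k) w = P @ i # Q"
  proof -
    have "take (Suc j + k) w = take (Suc j) w @ take k (drop (Suc j) w)"
      by (rule take_add)
    also have "take (Suc j) w = take j w @ [w ! j]"
      using len by (simp add: take_Suc_conv_app_nth)
    finally show ?thesis
      using letter by (simp add: P_def Q_def t_def)
  qed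
  have drop_w: "drop j w = i # Q @ m # R"
  proof -
    have "k < length t"
      using len by (simp add: t_def)
    then have "drop k t = t ! k # drop (Suc k) t"
      by (simp add: Cons_nth_drop_Suc)
    moreover have "drop j w = w ! j # t"
      using len by (simp add: t_def Cons_nth_drop_Suc)
    ultimately show ?thesis
      using letter tk drop_t by (metis Q_def append_take_drop_id)
  qed
  have drop_take_w: "drop j (take (Suc j + k) w) = i # Q"
    unfolding take_w using len by (simp add: P_def)
  show ?thesis
    unfolding deriv_after_cut_def if_P[OF letter] m_def[symmetric] tk drop_t drop_take
      drop_take_w Q_def[symmetric] R_def[symmetric]
  proof (rule sum.cong[OF refl])
    fix v assume "v \<in> kys (d m)"
    \<comment> \<open>the extra sign of \<open>D\<close> passing the cut letter \<open>x\<^sub>i\<close> is absorbed by the parity of \<open>v\<close>\<close>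
    then have "wpar par v = (par m \<noteq> p)"
      using homog_d by (simp add: homog_def)
    then show "sng (take j w, Q @ v @ R)
        (ksign (p \<and> wpar par (take (Suc j + k) w)) * lkp (d m) v
          * ksign (par i \<and> wpar par ((i # Q) @ v @ R)))
      = sng (take j w, Q @ v @ R)
        (ksign (par i \<and> wpar par (drop j w)) * (ksign (p \<and> wpar par (take j w))
          * (ksign (p \<and> wpar par Q) * lkp (d m) v)))"
      unfolding take_w drop_w P_def[symmetric]
      by (cases "par i"; cases "par m"; cases p; cases "wpar par P"; cases "wpar par Q";
          cases "wpar par R") (simp_all add: ksign_def)
  qed
qed

lemma one_tensor_deriv_word_cut:
  assumes homog_d: "\<forall>m. homog par (par m \<noteq> p) (d m)" and len: "j < length w"
  shows "(if w ! j = i then scal (ksign (par i \<and> wpar par (drop j w)))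
      (scal (ksign (p \<and> wpar par (take j w))) (tensor (sng (take j w) 1) (deriv_word par p d (drop (Suc j) w))))
      else 0)
    = (\<Sum>k<length w - Suc j. deriv_after_cut par p d i w j (Suc j + k))"
proof (cases "w ! j = i")
  case False
  then show ?thesis
    by (simp add: deriv_after_cut_def)
next
  case True
  define t where "t = drop (Suc j) w"
  have "length t = length w - Suc j"
    by (simp add: t_def)
  then have "scal (ksign (par i \<and> wpar par (drop j w)))
        (scal (ksign (p \<and> wpar par (take j w))) (tensor (sng (take j w) 1) (deriv_word par p d t)))
      = (\<Sum>k<length w - Suc j. \<Sum>v\<in>kys (d (t ! k)). sng (take j w, take k t @ v @ drop (Suc k) t)
          (ksign (par i \<and> wpar par (drop j w)) * (ksign (p \<and> wpar par (take j w))
            * (ksign (p \<and> wpar par (take k t)) * lkp (d (t ! k)) v))))"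
    unfolding deriv_word_def
    by (simp add: tensor_sum_right tensor_singles scal_sum del: wpar_append)
  also have "\<dots> = (\<Sum>k<length w - Suc j. deriv_after_cut par p d i w j (Suc j + k))"
    by (rule sum.cong[OF refl])
      (use deriv_after_cut_Suc_add[OF homog_d _ True] in \<open>simp add: t_def\<close>)
  finally show ?thesis
    using True by (simp add: t_def)
qed

lemma one_tensor_deriv_nabla_word:
  assumes "\<forall>m. homog par (par m \<noteq> p) (d m)"
  shows "(\<Sum>j<length w. if w ! j = i then scal (ksign (par i \<and> wpar par (drop j w)))
      (scal (ksign (p \<and> wpar par (take j w))) (tensor (sng (take j w) 1) (deriv_word par p d (drop (Suc j) w))))
      else 0)
    = (\<Sum>k<length w. \<Sum>v\<in>kys (d (w ! k)). scal (ksign (p \<and> wpar par (take k w)) * lkp (d (w ! k)) v)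
      (cuts_left par i (take k w) (v @ drop (Suc k) w)))"
proof -
  have "(\<Sum>j<length w. if w ! j = i then scal (ksign (par i \<and> wpar par (drop j w)))
      (scal (ksign (p \<and> wpar par (take j w))) (tensor (sng (take j w) 1) (deriv_word par p d (drop (Suc j) w))))
      else 0)
    = (\<Sum>j<length w. \<Sum>k<length w - Suc j. deriv_after_cut par p d i w j (Suc j + k))"
    by (rule sum.cong[OF refl]) (simp add: one_tensor_deriv_word_cut[OF assms])
  also have "\<dots> = (\<Sum>k<length w. \<Sum>j<k. deriv_after_cut par p d i w j k)"
    by (rule sum_lessThan_triangle_swap)
  finally show ?thesis
    by (simp add: cuts_left_deriv_word)
qed

text \<open>Cuts of \<open>D(w)\<close> falling inside the word \<open>v\<close> that replaced the letter at position \<open>k\<close>.\<close>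
definition nabla_cross :: "('a \<Rightarrow> bool) \<Rightarrow> bool \<Rightarrow> ('a \<Rightarrow> 'a tens) \<Rightarrow> 'a \<Rightarrow> 'a list \<Rightarrow> 'a tens2" where
  "nabla_cross par p d i w = (\<Sum>k<length w. \<Sum>v\<in>kys (d (w ! k)).
     scal (ksign (p \<and> wpar par (take k w)) * lkp (d (w ! k)) v) (cuts_mid par i (take k w) v (drop (Suc k) w)))"

lemma if_add_zero:
  "(if P then a + b else 0) = (if P then a else 0) + (if P then b else (0::'b::comm_monoid_add))"
  by simp

lemma L2_nabla_word:
  assumes "\<And>u. D (sng u 1) = deriv_word par p d u"
  shows "L2 par p D (nabla_word par i w)
    = (\<Sum>j<length w. if w ! j = i then scal (ksign (par i \<and> wpar par (drop j w)))
         (tensor (deriv_word par p d (take j w)) (sng (drop (Suc j) w) 1)) else 0)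
    + (\<Sum>j<length w. if w ! j = i then scal (ksign (par i \<and> wpar par (drop j w)))
         (scal (ksign (p \<and> wpar par (take j w)))
           (tensor (sng (take j w) 1) (deriv_word par p d (drop (Suc j) w)))) else 0)"
  unfolding L2_def nabla_word_def
  by (simp add: lin_ext_sum assms if_distrib[of "lin_ext _"] if_add_zero sum.distrib
      del: scal_scal wpar_append cong: if_cong)

lemma nabla_word_deriv_word:
  assumes "\<forall>m. homog par (par m \<noteq> p) (d m)" and "\<And>u. D (sng u 1) = deriv_word par p d u"
  shows "lin_ext (nabla_word par i) (deriv_word par p d w) = L2 par p D (nabla_word par i w) + nabla_cross par p d i w"
proof -
  have "lin_ext (nabla_word par i) (deriv_word par p d w)
      = (\<Sum>k<length w. \<Sum>v\<in>kys (d (w ! k)). scal (ksign (p \<and> wpar par (take k w)) * lkp (d (w ! k)) v)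
          (cuts_left par i (take k w) (v @ drop (Suc k) w) + cuts_mid par i (take k w) v (drop (Suc k) w)
            + cuts_right par i (take k w @ v) (drop (Suc k) w)))"
    unfolding deriv_word_def by (simp add: lin_ext_sum nabla_word_append3 del: scal_add)
  also have "\<dots> = (\<Sum>k<length w. \<Sum>v\<in>kys (d (w ! k)). scal (ksign (p \<and> wpar par (take k w)) * lkp (d (w ! k)) v)
          (cuts_left par i (take k w) (v @ drop (Suc k) w)))
      + nabla_cross par p d i w
      + (\<Sum>k<length w. \<Sum>v\<in>kys (d (w ! k)). scal (ksign (p \<and> wpar par (take k w)) * lkp (d (w ! k)) v)
          (cuts_right par i (take k w @ v) (drop (Suc k) w)))"
    unfolding nabla_cross_def by (simp add: sum.distrib)
  also have "\<dots> = L2 par p D (nabla_word par i w) + nabla_cross par p d i w"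
    unfolding L2_nabla_word[OF assms(2)] deriv_tensor_one_nabla_word
      one_tensor_deriv_nabla_word[OF assms(1)]
    by (simp add: algebra_simps)
  finally show ?thesis .
qed

lemma nabla_word_vector_field:
  assumes "is_vector_field par p D"
  shows "lin_ext (nabla_word par i) (D a)
    = L2 par p D (lin_ext (nabla_word par i) a) + lin_ext (nabla_cross par p (\<lambda>i. D (gen i)) i) a"
proof -
  have "lin_ext (nabla_word par i) (D a)
      = lin_ext (\<lambda>w. lin_ext (nabla_word par i) (deriv_word par p (\<lambda>i. D (gen i)) w)) a"
    unfolding vector_field_eq_lin_ext[OF assms, of a] lin_ext_lin_ext ..
  also have "\<dots> = lin_ext (\<lambda>w. L2 par p D (nabla_word par i w) + nabla_cross par p (\<lambda>i. D (gen i)) i w) a"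
    using nabla_word_deriv_word[where D = D, OF _ vector_field_single[OF assms]]
      homog_vector_field_gen[OF assms] by simp
  also have "\<dots> = L2 par p D (lin_ext (nabla_word par i) a) + lin_ext (nabla_cross par p (\<lambda>i. D (gen i)) i) a"
    unfolding lin_ext_fun_add L2_def lin_ext_lin_ext ..
  finally show ?thesis .
qed

section \<open>Cancellation of the cross terms in \<open>DR\<^sup>0 \<otimes> DR\<^sup>0\<close>\<close>

lemma rspan_zero: "0 \<in> rspan S"
  unfolding rspan_def by (rule CollectI, rule exI[of _ "{}"]) simp

lemma rspan_base: "s \<in> S \<Longrightarrow> s \<in> rspan S"
  unfolding rspan_def by (rule CollectI, rule exI[of _ "{s}"], rule exI[of _ "\<lambda>_. 1"]) simp

lemma rspan_add:
  assumes "x \<in> rspan S" "y \<in> rspan S"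
  shows "x + y \<in> rspan S"
proof -
  obtain F c G e where F: "finite F" "F \<subseteq> S" "x = (\<Sum>s\<in>F. scal (c s) s)"
    and G: "finite G" "G \<subseteq> S" "y = (\<Sum>s\<in>G. scal (e s) s)"
    using assms unfolding rspan_def by blast
  define c' where "c' s = (if s \<in> F then c s else 0)" for s
  define e' where "e' s = (if s \<in> G then e s else 0)" for s
  have x: "x = (\<Sum>s\<in>F \<union> G. scal (c' s) s)"
    unfolding F(3) by (rule sum.mono_neutral_cong_left) (auto simp: F G c'_def)
  have y: "y = (\<Sum>s\<in>F \<union> G. scal (e' s) s)"
    unfolding G(3) by (rule sum.mono_neutral_cong_left) (auto simp: F G e'_def)
  show ?thesis
    unfolding rspan_def
    by (intro CollectI exI[of _ "F \<union> G"] exI[of _ "\<lambda>s. c' s + e' s"])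
      (simp add: x y F G scal_add_left sum.distrib)
qed

lemma rspan_sum: "(\<And>x. x \<in> A \<Longrightarrow> f x \<in> rspan S) \<Longrightarrow> sum f A \<in> rspan S"
  by (induction A rule: infinite_finite_induct) (auto simp: rspan_zero rspan_add)

lemma single_commutator_in_comm_sub:
  "sng (x @ y) 1 - sng (y @ x) (ksign (wpar par x \<and> wpar par y)) \<in> comm_sub par"
proof -
  have "tmul (sng x 1) (sng y 1) - scal (ksign (wpar par x \<and> wpar par y)) (tmul (sng y 1) (sng x 1))
     \<in> {tmul a b - scal (ksign (p \<and> q)) (tmul b a) | a b p q. homog par p a \<and> homog par q b}"
    using homog_single[of par x 1] homog_single[of par y 1] by blast
  then show ?thesis
    unfolding comm_sub_def by (simp add: tmul_singles rspan_base)
qed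

lemma rotate_single_in_dr2_kernel:
  "sng (x @ y, z @ t) c
     - sng (y @ x, t @ z) (c * ksign ((wpar par x \<and> wpar par y) \<noteq> (wpar par z \<and> wpar par t)))
   \<in> dr2_kernel par"
proof -
  define s1 where "s1 = ksign (wpar par x \<and> wpar par y)"
  define s2 where "s2 = ksign (wpar par z \<and> wpar par t)"
  have "tensor (sng (x @ y) 1 - sng (y @ x) s1) (sng (z @ t) c) \<in> dr2_kernel par"
    unfolding dr2_kernel_def using single_commutator_in_comm_sub[of x y par]
    by (intro rspan_base) (auto simp: s1_def)
  moreover have "tensor (sng (y @ x) (s1 * c)) (sng (z @ t) 1 - sng (t @ z) s2) \<in> dr2_kernel par"
    unfolding dr2_kernel_def using single_commutator_in_comm_sub[of z t par]
    by (intro rspan_base) (auto simp: s2_def)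
  ultimately have "tensor (sng (x @ y) 1 - sng (y @ x) s1) (sng (z @ t) c)
      + tensor (sng (y @ x) (s1 * c)) (sng (z @ t) 1 - sng (t @ z) s2) \<in> dr2_kernel par"
    unfolding dr2_kernel_def by (rule rspan_add)
  moreover have "s1 * s2 = ksign ((wpar par x \<and> wpar par y) \<noteq> (wpar par z \<and> wpar par t))"
    by (simp add: s1_def s2_def ksign_mult)
  ultimately show ?thesis
    by (simp add: tensor_diff_left tensor_diff_right tensor_singles mult_ac)
qed

lemma dr2_kernel_sum: "(\<And>x. x \<in> A \<Longrightarrow> f x \<in> dr2_kernel par) \<Longrightarrow> sum f A \<in> dr2_kernel par"
  unfolding dr2_kernel_def by (rule rspan_sum)

text \<open>The cross term for the letter \<open>x\<^sub>m\<close> at position \<open>k\<close> of \<open>w\<close>, replaced by \<open>v\<close>, cut at the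
  letter \<open>x\<^sub>i\<close> at position \<open>j\<close> of \<open>v\<close>; \<open>\<alpha>\<close> is the coefficient of \<open>w\<close>.\<close>
definition cross_term :: "('a \<Rightarrow> bool) \<Rightarrow> bool \<Rightarrow> ('a \<Rightarrow> 'a tens) \<Rightarrow> rat \<Rightarrow> 'a \<Rightarrow> 'a \<Rightarrow> 'a list \<Rightarrow> nat
    \<Rightarrow> 'a list \<Rightarrow> nat \<Rightarrow> 'a tens2" where
  "cross_term par p d \<alpha> i m w k v j = (if w ! k = m \<and> v ! j = i then
     sng (take k w @ take j v, drop (Suc j) v @ drop (Suc k) w)
       (\<alpha> * (ksign (p \<and> wpar par (take k w)) * lkp (d m) v
         * ksign (par i \<and> wpar par (drop j v @ drop (Suc k) w))))
     else 0)"

lemma scal_nabla_cross_eq_sum_cross_term: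
  fixes d :: "'a::finite \<Rightarrow> 'a tens"
  shows "scal \<alpha> (nabla_cross par p d i w)
    = (\<Sum>m\<in>UNIV. \<Sum>k<length w. \<Sum>v\<in>kys (d m). \<Sum>j<length v. cross_term par p d \<alpha> i m w k v j)"
proof -
  have per_position: "(\<Sum>m\<in>UNIV. \<Sum>v\<in>kys (d m). \<Sum>j<length v. cross_term par p d \<alpha> i m w k v j)
      = scal \<alpha> (\<Sum>v\<in>kys (d (w ! k)). scal (ksign (p \<and> wpar par (take k w)) * lkp (d (w ! k)) v)
          (cuts_mid par i (take k w) v (drop (Suc k) w)))" for k
  proof -
    define H where "H m = (\<Sum>v\<in>kys (d m). \<Sum>j<length v. if v ! j = i then
      sng (take k w @ take j v, drop (Suc j) v @ drop (Suc k) w)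
        (\<alpha> * (ksign (p \<and> wpar par (take k w)) * lkp (d m) v
          * ksign (par i \<and> wpar par (drop j v @ drop (Suc k) w))))
      else 0)" for m
    have "(\<Sum>m\<in>UNIV. \<Sum>v\<in>kys (d m). \<Sum>j<length v. cross_term par p d \<alpha> i m w k v j)
        = (\<Sum>m\<in>UNIV. if w ! k = m then H m else 0)"
      by (rule sum.cong[OF refl]) (auto simp: H_def cross_term_def)
    also have "\<dots> = H (w ! k)"
      by (simp add: sum.delta)
    finally show ?thesis
      unfolding H_def cuts_mid_def
      by (simp add: scal_sum if_distrib[of "scal _"] mult_ac del: wpar_append cong: if_cong)
  qed
  have "(\<Sum>m\<in>UNIV. \<Sum>k<length w. \<Sum>v\<in>kys (d m). \<Sum>j<length v. cross_term par p d \<alpha> i m w k v j)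
      = (\<Sum>k<length w. \<Sum>m\<in>UNIV. \<Sum>v\<in>kys (d m). \<Sum>j<length v. cross_term par p d \<alpha> i m w k v j)"
    by (rule sum.swap)
  also have "\<dots> = scal \<alpha> (nabla_cross par p d i w)"
    by (simp only: per_position nabla_cross_def scal_sum)
  finally show ?thesis ..
qed

lemma sum_swap_nested:
  "(\<Sum>v\<in>V. \<Sum>j\<in>J v. \<Sum>w\<in>W. \<Sum>k\<in>K w. f v j w k) = (\<Sum>w\<in>W. \<Sum>k\<in>K w. \<Sum>v\<in>V. \<Sum>j\<in>J v. f v j w k)"
proof -
  have "(\<Sum>v\<in>V. \<Sum>j\<in>J v. \<Sum>w\<in>W. \<Sum>k\<in>K w. f v j w k) = (\<Sum>v\<in>V. \<Sum>w\<in>W. \<Sum>j\<in>J v. \<Sum>k\<in>K w. f v j w k)"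
    by (rule sum.cong[OF refl], rule sum.swap)
  also have "\<dots> = (\<Sum>w\<in>W. \<Sum>v\<in>V. \<Sum>k\<in>K w. \<Sum>j\<in>J v. f v j w k)"
    by (subst sum.swap) (intro sum.cong[OF refl] sum.swap)
  also have "\<dots> = (\<Sum>w\<in>W. \<Sum>k\<in>K w. \<Sum>v\<in>V. \<Sum>j\<in>J v. f v j w k)"
    by (intro sum.cong[OF refl] sum.swap)
  finally show ?thesis .
qed

lemma cross_term_rotation_in_dr2_kernel:
  fixes d e :: "'a \<Rightarrow> 'a tens"
  assumes homog_d: "\<forall>m. homog par (par m \<noteq> p) (d m)" and homog_e: "\<forall>m. homog par (par m \<noteq> q) (e m)"
    and w: "w \<in> kys (e i)" and v: "v \<in> kys (d m)" and k: "k < length w" and j: "j < length v"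
  shows "cross_term par p d (lkp (e i) w) i m w k v j
      - scal (ksign (p \<and> q)) (cross_term par q e (lkp (d m) v) m i v j w k)
    \<in> dr2_kernel par"
proof (cases "w ! k = m \<and> v ! j = i")
  case False
  then show ?thesis
    by (auto simp: cross_term_def dr2_kernel_def rspan_zero)
next
  case True
  define A B a b where "A = take k w" and "B = drop (Suc k) w" and "a = take j v" and "b = drop (Suc j) v"
  have drop_w: "drop k w = m # B"
    using k True by (simp add: B_def Cons_nth_drop_Suc[symmetric])
  have drop_v: "drop j v = i # b"
    using j True by (simp add: b_def Cons_nth_drop_Suc[symmetric])
  have "wpar par w = (par i \<noteq> q)" "wpar par v = (par m \<noteq> p)"
    using homog_d homog_e w v by (auto simp: homog_def)
  moreover have "w = A @ m # B" "v = a @ i # b"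
    using drop_w drop_v by (metis A_def append_take_drop_id, metis a_def append_take_drop_id)
  ultimately have par_w: "(wpar par A \<noteq> (par m \<noteq> wpar par B)) = (par i \<noteq> q)"
    and par_v: "(wpar par a \<noteq> (par i \<noteq> wpar par b)) = (par m \<noteq> p)"
    by simp_all
  define c where
    "c = lkp (e i) w * (ksign (p \<and> wpar par A) * lkp (d m) v * ksign (par i \<and> wpar par (drop j v @ B)))"
  define c' where
    "c' = lkp (d m) v * (ksign (q \<and> wpar par a) * lkp (e i) w * ksign (par m \<and> wpar par (drop k w @ b)))"
  have term_w: "cross_term par p d (lkp (e i) w) i m w k v j = sng (A @ a, b @ B) c"
    unfolding cross_term_def c_def A_def B_def a_def b_def using True by (simp only: if_True simp_thms)
  have term_v: "cross_term par q e (lkp (d m) v) m i v j w k = sng (a @ A, B @ b) c'"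
    unfolding cross_term_def c'_def A_def B_def a_def b_def using True by (simp only: if_True simp_thms)
  have sign: "ksign (p \<and> q) * c' = c * ksign ((wpar par A \<and> wpar par a) \<noteq> (wpar par b \<and> wpar par B))"
    unfolding c_def c'_def drop_w drop_v using par_w par_v
    by (cases "par i"; cases "par m"; cases p; cases q; cases "wpar par A"; cases "wpar par B";
        cases "wpar par a"; cases "wpar par b") (simp_all add: ksign_def)
  show ?thesis
    unfolding term_w term_v scal_single sign by (rule rotate_single_in_dr2_kernel)
qed

lemma sum_lin_ext_nabla_cross:
  fixes d e :: "'a::finite \<Rightarrow> 'a tens"
  shows "(\<Sum>i\<in>UNIV. lin_ext (nabla_cross par p d i) (e i))
    = (\<Sum>i\<in>UNIV. \<Sum>m\<in>UNIV. \<Sum>w\<in>kys (e i). \<Sum>k<length w. \<Sum>v\<in>kys (d m). \<Sum>j<length v.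
         cross_term par p d (lkp (e i) w) i m w k v j)"
  unfolding lin_ext_def scal_nabla_cross_eq_sum_cross_term by (intro sum.cong[OF refl] sum.swap)

lemma nabla_cross_antisym_in_dr2_kernel:
  fixes d e :: "'a::finite \<Rightarrow> 'a tens"
  assumes homog_d: "\<forall>m. homog par (par m \<noteq> p) (d m)" and homog_e: "\<forall>m. homog par (par m \<noteq> q) (e m)"
  shows "(\<Sum>i\<in>UNIV. lin_ext (nabla_cross par p d i) (e i))
      - scal (ksign (p \<and> q)) (\<Sum>m\<in>UNIV. lin_ext (nabla_cross par q e m) (d m))
    \<in> dr2_kernel par"
proof -
  have "(\<Sum>m\<in>UNIV. lin_ext (nabla_cross par q e m) (d m))
      = (\<Sum>m\<in>UNIV. \<Sum>i\<in>UNIV. \<Sum>v\<in>kys (d m). \<Sum>j<length v. \<Sum>w\<in>kys (e i). \<Sum>k<length w.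
           cross_term par q e (lkp (d m) v) m i v j w k)"
    by (rule sum_lin_ext_nabla_cross)
  also have "\<dots> = (\<Sum>i\<in>UNIV. \<Sum>m\<in>UNIV. \<Sum>w\<in>kys (e i). \<Sum>k<length w. \<Sum>v\<in>kys (d m). \<Sum>j<length v.
           cross_term par q e (lkp (d m) v) m i v j w k)"
    by (subst sum.swap) (intro sum.cong[OF refl] sum_swap_nested)
  finally show ?thesis
    unfolding sum_lin_ext_nabla_cross[of par p d e]
    by (simp only: scal_sum flip: sum_subtractf)
      (intro dr2_kernel_sum cross_term_rotation_in_dr2_kernel[OF homog_d homog_e]; simp)
qed

lemma L2_sum: "L2 par p D (sum f A) = (\<Sum>x\<in>A. L2 par p D (f x))"
  by (simp add: L2_def lin_ext_sum)

lemma nabla_vf_bracket: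
  assumes "is_vector_field par p D" "is_vector_field par q E"
  defines "d \<equiv> \<lambda>i. D (gen i)" and "e \<equiv> \<lambda>i. E (gen i)"
  shows "nabla par (vf_bracket p D q E)
    = L2 par p D (nabla par E) - scal (ksign (p \<and> q)) (L2 par q E (nabla par D))
      + ((\<Sum>i\<in>UNIV. lin_ext (nabla_cross par p d i) (e i))
         - scal (ksign (p \<and> q)) (\<Sum>m\<in>UNIV. lin_ext (nabla_cross par q e m) (d m)))"
proof -
  have "nabla par (vf_bracket p D q E) = (\<Sum>i\<in>UNIV.
      lin_ext (nabla_word par i) (D (e i)) - scal (ksign (p \<and> q)) (lin_ext (nabla_word par i) (E (d i))))"
    unfolding nabla_eq_sum_nabla_word vf_bracket_def lin_ext_diff lin_ext_scal d_def e_def ..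
  then show ?thesis
    unfolding nabla_word_vector_field[OF assms(1), folded d_def]
      nabla_word_vector_field[OF assms(2), folded e_def]
    by (simp add: nabla_eq_sum_nabla_word L2_sum sum_subtractf sum.distrib scal_sum d_def e_def)
qed

theorem lemma2p10:
  fixes par :: "'a::finite \<Rightarrow> bool"
    and D E :: "'a tens \<Rightarrow> 'a tens"
    and p q :: bool
  assumes "is_vector_field par p D"
    and "is_vector_field par q E"
  shows "dr2_eq par (nabla par (vf_bracket p D q E))
           (L2 par p D (nabla par E) - scal (ksign (p \<and> q)) (L2 par q E (nabla par D)))"
  unfolding dr2_eq_def nabla_vf_bracket[OF assms] add_diff_cancel_left'
  by (intro nabla_cross_antisym_in_dr2_kernel homog_vector_field_gen allI assms)

end
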